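(* For every positive integer $n$, the matrix $L$ indexed by $P(n)$ defined in the context is invertible.
   Context: Let $\phi$ denote Euler's totient function. For a positive integer $n$ let $P(n)=\{(i,j): j\mid n,\ i\mid j\}$. Let $L$ be the square matrix with rows and columns indexed by $P(n)$ whose entry in row $(i,j)$ and column $(d,c)$ is $L_{(i,j)}^{(d,c)} = \phi(d)\,\frac{n}{\operatorname{lcm}(j,c)}$ if $d\mid i$ and $j\mid \operatorname{lcm}(i,c)$, and $0$ otherwise. *)

theory Defs
  imports "HOL-Number_Theory.Number_Theory"
begin

definition Pset :: "nat \<Rightarrow> (nat \<times> nat) set" where
  "Pset n = {(i, j). j dvd n \<and> i dvd j}"

definition Lmat :: "nat \<Rightarrow> nat \<times> nat \<Rightarrow> nat \<times> nat \<Rightarrow> rat" where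
  "Lmat n = (\<lambda>(i, j) (d, c).
     if d dvd i \<and> j dvd lcm i c
     then of_nat (totient d) * (of_nat n / of_nat (lcm j c))
     else 0)"

definition invertible_on :: "'a set \<Rightarrow> ('a \<Rightarrow> 'a \<Rightarrow> rat) \<Rightarrow> bool" where
  "invertible_on I A \<longleftrightarrow> (\<exists>B :: 'a \<Rightarrow> 'a \<Rightarrow> rat.
     (\<forall>p\<in>I. \<forall>q\<in>I. (\<Sum>r\<in>I. A p r * B r q) = (if p = q then 1 else 0)) \<and>
     (\<forall>p\<in>I. \<forall>q\<in>I. (\<Sum>r\<in>I. B p r * A r q) = (if p = q then 1 else 0)))"

end

theory Submission
  imports Defs "HOL-Library.Product_Lexorder"
begin

text \<open>Order \<open>P(n)\<close> lexicographically by \<open>i\<close> increasing and \<open>j\<close> decreasing. A nonzero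
  entry of \<open>L\<close> in row \<open>(i,j)\<close> and column \<open>(d,c)\<close> forces \<open>d | i\<close>, and for \<open>d = i\<close> also \<open>j | lcm(i,c) = c\<close>, so \<open>(d,c)\<close> never
  comes after \<open>(i,j)\<close>: \<open>L\<close> is lower triangular, with diagonal entries \<open>\<phi>(i) n / j \<noteq> 0\<close>.
  A triangular matrix with nonzero diagonal is invertible, as one sees by adjoining the
  indices one at a time in increasing order and writing down the block inverse.\<close>

lemma invertible_on_insert_lower_triangular:
  fixes A :: "'a \<Rightarrow> 'a \<Rightarrow> rat"
  assumes inv: "invertible_on S A" and fin: "finite S" and m: "m \<notin> S"
    and diag: "A m m \<noteq> 0" and col: "\<And>y. y \<in> S \<Longrightarrow> A y m = 0"
  shows "invertible_on (insert m S) A"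
proof -
  obtain C where AC: "\<And>p q. p \<in> S \<Longrightarrow> q \<in> S \<Longrightarrow> (\<Sum>r\<in>S. A p r * C r q) = (if p = q then 1 else 0)"
    and CA: "\<And>p q. p \<in> S \<Longrightarrow> q \<in> S \<Longrightarrow> (\<Sum>r\<in>S. C p r * A r q) = (if p = q then 1 else 0)"
    using inv unfolding invertible_on_def by blast
  define a where "a = A m m"
  define B where "B p q =
    (if p = m then (if q = m then 1 / a else - (\<Sum>r\<in>S. A m r * C r q) / a)
     else if q = m then 0 else C p q)" for p q
  have B_mm: "B m m = 1 / a" and B_m: "q \<in> S \<Longrightarrow> B m q = - (\<Sum>r\<in>S. A m r * C r q) / a"
    and B_0: "p \<in> S \<Longrightarrow> B p m = 0" and B_C: "p \<in> S \<Longrightarrow> q \<in> S \<Longrightarrow> B p q = C p q"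
    for p q using m by (auto simp: B_def)
  have sum_insert: "(\<Sum>r\<in>insert m S. g r) = g m + (\<Sum>r\<in>S. g r)" for g :: "'a \<Rightarrow> rat"
    using fin m by simp
  have B_S: "(\<Sum>r\<in>S. h r * B r q) = (\<Sum>r\<in>S. h r * C r q)" if "q \<in> S" for h q
    using m that by (intro sum.cong) (auto simp: B_C)
  have AB: "(\<Sum>r\<in>insert m S. A p r * B r q) = (if p = q then 1 else 0)"
    if "p \<in> insert m S" "q \<in> insert m S" for p q
  proof -
    have "(\<Sum>r\<in>S. A p r * B r m) = 0"
      using m by (intro sum.neutral) (auto simp: B_0)
    then show ?thesis
      using that diag m col[of p] AC[of p q] B_S[of q "A p"]
      by (auto simp: sum_insert B_mm B_m B_0 a_def)
  qed
  have BA: "(\<Sum>r\<in>insert m S. B p r * A r q) = (if p = q then 1 else 0)"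
    if "p \<in> insert m S" "q \<in> insert m S" for p q
  proof -
    have B_col: "(\<Sum>r\<in>S. B p r * A r m) = 0"
      by (intro sum.neutral) (auto simp: col)
    have B_row: "(\<Sum>r\<in>S. B m r * A r q) = - A m q / a" if "q \<in> S"
    proof -
      have "(\<Sum>r\<in>S. B m r * A r q) = - (\<Sum>r\<in>S. \<Sum>s\<in>S. A m s * (C s r * A r q)) / a"
        using m by (simp add: B_m sum_divide_distrib sum_distrib_right mult.assoc
            flip: sum_negf)
      also have "\<dots> = - (\<Sum>s\<in>S. A m s * (\<Sum>r\<in>S. C s r * A r q)) / a"
        by (subst sum.swap) (simp add: sum_distrib_left)
      also have "\<dots> = - (\<Sum>s\<in>S. A m s * (if s = q then 1 else 0)) / a"
        using CA[OF _ that] by simp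
      also have "\<dots> = - A m q / a"
        using that fin by (simp add: if_distrib cong: if_cong)
      finally show ?thesis .
    qed
    show ?thesis
      using that diag m B_col B_row CA[of p q]
      by (auto simp: sum_insert B_mm B_m B_0 B_C a_def intro!: sum.cong)
  qed
  show ?thesis
    unfolding invertible_on_def using AB BA by blast
qed

lemma invertible_on_triangular:
  fixes A :: "'a \<Rightarrow> 'a \<Rightarrow> rat" and rank :: "'a \<Rightarrow> 'b::linorder"
  assumes fin: "finite I"
    and diag: "\<And>p. p \<in> I \<Longrightarrow> A p p \<noteq> 0"
    and triangular: "\<And>p q. p \<in> I \<Longrightarrow> q \<in> I \<Longrightarrow> A p q \<noteq> 0 \<Longrightarrow> p = q \<or> rank q < rank p"
  shows "invertible_on I A"
proof -
  have "invertible_on S A" if "S \<subseteq> I" for S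
    using finite_subset[OF that fin] that
  proof (induction S rule: finite_ranking_induct[where f = rank])
    case empty
    show ?case by (simp add: invertible_on_def)
  next
    case (insert m S)
    show ?case
    proof (cases "m \<in> S")
      case True
      with insert show ?thesis by (simp add: insert_absorb)
    next
      case False
      have "A y m = 0" if "y \<in> S" for y
        using triangular[of y m] insert.hyps(2)[OF that] insert.prems False that by force
      with insert False diag show ?thesis
        by (intro invertible_on_insert_lower_triangular) auto
    qed
  qed
  then show ?thesis by blast
qed

lemma Pset_pos:
  assumes "n > 0" and "(i, j) \<in> Pset n"
  shows "i > 0" and "j > 0"
  using assms by (auto simp: Pset_def intro!: Nat.gr0I)

lemma finite_Pset: "n > 0 \<Longrightarrow> finite (Pset n)"
  by (rule finite_subset[of _ "{..n} \<times> {..n}"])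
    (auto simp: Pset_def intro: dvd_imp_le dvd_trans[THEN dvd_imp_le])

lemma Lmat_diag_nonzero:
  assumes "n > 0" and "p \<in> Pset n"
  shows "Lmat n p p \<noteq> 0"
  using assms Pset_pos[OF assms(1)] by (cases p) (auto simp: Lmat_def)

lemma Lmat_lower_triangular:
  assumes "n > 0" and "(i, j) \<in> Pset n" and "(d, c) \<in> Pset n"
    and "Lmat n (i, j) (d, c) \<noteq> 0"
  shows "(i, j) = (d, c) \<or> (d, - int c) < (i, - int j)"
proof -
  have "d dvd i" and "d = i \<Longrightarrow> j dvd c"
    using assms(3,4) by (auto simp: Lmat_def Pset_def lcm_proj2_iff split: if_splits)
  moreover have "i > 0" "c > 0"
    using Pset_pos assms(1-3) by blast+
  ultimately have "d < i \<or> d = i \<and> (j = c \<or> j < c)"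
    by (metis dvd_imp_le le_neq_implies_less)
  then show ?thesis by auto
qed

theorem proposition3p3:
  fixes n :: nat
  assumes "n > 0"
  shows "invertible_on (Pset n) (Lmat n)"
proof (rule invertible_on_triangular[where rank = "\<lambda>(i, j). (i, - int j)"])
  show "finite (Pset n)"
    using assms by (rule finite_Pset)
  show "Lmat n p p \<noteq> 0" if "p \<in> Pset n" for p
    using assms that by (rule Lmat_diag_nonzero)
  show "p = q \<or> (case q of (i, j) \<Rightarrow> (i, - int j)) < (case p of (i, j) \<Rightarrow> (i, - int j))"
    if "p \<in> Pset n" "q \<in> Pset n" "Lmat n p q \<noteq> 0" for p q
    using Lmat_lower_triangular[OF assms] that by (cases p, cases q) simp
qed

end
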